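(* Let $I$ be a monoid with identity $1$. For every object $A$ of $\mathrm{bACT}(I)$, the evaluation map $\mathrm{ev}^l_{\mathrm{Map}^l_I(A)}:\mathrm{Map}^l_I(\mathrm{Map}^l_I(A))\to\mathrm{Map}^l_I(A)$, $h\mapsto h(1)$, is a bijective $I$-equivariant map with $I$-equivariant inverse, and these maps form a natural isomorphism $\mathrm{Map}^l_I\circ\mathrm{Map}^l_I\Rightarrow\mathrm{Map}^l_I$. Likewise, $\mathrm{ev}^r_{\mathrm{Map}^r_I(A)}:\mathrm{Map}^r_I(\mathrm{Map}^r_I(A))\to\mathrm{Map}^r_I(A)$, $h\mapsto h(1)$, defines a natural isomorphism $\mathrm{Map}^r_I\circ\mathrm{Map}^r_I\Rightarrow\mathrm{Map}^r_I$.
   Context: Let $I$ be a monoid with operation $\otimes$. For a set $X$, $\mathrm{End}_l(X)$ denotes self-maps written on the left with product $f\circ g$ ($g$ first); $\mathrm{End}_r(X)$ denotes self-maps written on the right, $x\mapsto(x)f$, with $(x)(fg)=((x)f)g$. An $I$-set is a set $X$ with a pair $\xi=(\xi_l,\xi_r)$ of monoid homomorphisms $\xi_l:I\to\mathrm{End}_l(X)$, $\xi_r:I\to\mathrm{End}_r(X)$ with $(\xi_l(i)(x))\xi_r(j)=\xi_l(i)((x)\xi_r(j))$; $f:(X,\xi)\to(Y,\eta)$ is $I$-equivariant if $(f(\xi_l(i)(x)))\eta_r(i)=\eta_l(i)(f((x)\xi_r(i)))$ for all $i,x$. An $I$-set is invertible on one side if either $\xi_l(i)$ is bijective for all $i$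 or $\xi_r(i)$ is bijective for all $i$; $\mathrm{bACT}(I)$ is the category of $I$-sets that are products (componentwise action) of $I$-sets invertible on one side, with $I$-equivariant maps. For an $I$-set $(A,\alpha)$: $\mathrm{Map}^l_I(A)$ is the set of $f:I\to A$ with $(f(j))\alpha_r(i)=\alpha_l(i)(f(j\otimes i))$ for all $i,j$, with action $\theta_l(k)=\mathrm{id}$, $((f)\theta_r(k))(j)=f(k\otimes j)$; $\mathrm{Map}^r_I(A)$ is the set of $f:I\to A$ with $(f(i\otimes j))\alpha_r(i)=\alpha_l(i)(f(j))$ for all $i,j$, with action $(\vartheta_l(k)(f))(i)=f(i\otimes k)$, $\vartheta_r(k)=\mathrm{id}$. Both are functors via $u\mapsto(h\mapsto u\circ h)$. $\mathrm{ev}^l_A,\mathrm{ev}^r_A$ denote evaluation at $1$. *)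

theory Defs
  imports Main "HOL-Library.FuncSet"
begin

text \<open>The monoid I is a type of class monoid_mult, with the monoid operation written *
  and identity 1.  An I-set is a carrier set together with a left action actl and a
  right action actr; the right action (x)xi_r(i) is written actr i x.\<close>

record ('a, 'i) Iset =
  carr :: "'a set"
  actl :: "'i \<Rightarrow> 'a \<Rightarrow> 'a"
  actr :: "'i \<Rightarrow> 'a \<Rightarrow> 'a"

definition is_Iset :: "('a, 'i::monoid_mult) Iset \<Rightarrow> bool" where
  "is_Iset A \<longleftrightarrow>
     (\<forall>i. \<forall>x\<in>carr A. actl A i x \<in> carr A \<and> actr A i x \<in> carr A) \<and>
     (\<forall>x\<in>carr A. actl A 1 x = x \<and> actr A 1 x = x) \<and>
     (\<forall>i j. \<forall>x\<in>carr A. actl A (i * j) x = actl A i (actl A j x)) \<and>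
     (\<forall>i j. \<forall>x\<in>carr A. actr A (i * j) x = actr A j (actr A i x)) \<and>
     (\<forall>i j. \<forall>x\<in>carr A. actr A j (actl A i x) = actl A i (actr A j x))"

definition invertible_one_side :: "('a, 'i::monoid_mult) Iset \<Rightarrow> bool" where
  "invertible_one_side A \<longleftrightarrow>
     (\<forall>i. bij_betw (actl A i) (carr A) (carr A)) \<or> (\<forall>i. bij_betw (actr A i) (carr A) (carr A))"

definition equivariant :: "('a, 'i::monoid_mult) Iset \<Rightarrow> ('b, 'i) Iset \<Rightarrow> ('a \<Rightarrow> 'b) \<Rightarrow> bool" where
  "equivariant A B f \<longleftrightarrow>
     (\<forall>x\<in>carr A. f x \<in> carr B) \<and>
     (\<forall>i. \<forall>x\<in>carr A. actr B i (f (actl A i x)) = actl B i (f (actr A i x)))"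

definition bACT :: "('k \<Rightarrow> 'c, 'i::monoid_mult) Iset \<Rightarrow> bool" where
  "bACT A \<longleftrightarrow>
     (\<exists>(K::'k set) (Xs::'k \<Rightarrow> 'c set) (ls::'k \<Rightarrow> 'i \<Rightarrow> 'c \<Rightarrow> 'c) (rs::'k \<Rightarrow> 'i \<Rightarrow> 'c \<Rightarrow> 'c).
        (\<forall>k\<in>K. is_Iset \<lparr>carr = Xs k, actl = ls k, actr = rs k\<rparr> \<and>
                invertible_one_side \<lparr>carr = Xs k, actl = ls k, actr = rs k\<rparr>) \<and>
        carr A = PiE K Xs \<and>
        (\<forall>i. \<forall>x\<in>carr A. actl A i x = (\<lambda>k\<in>K. ls k i (x k))) \<and>
        (\<forall>i. \<forall>x\<in>carr A. actr A i x = (\<lambda>k\<in>K. rs k i (x k))))"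

definition Mapl :: "('a, 'i::monoid_mult) Iset \<Rightarrow> ('i \<Rightarrow> 'a, 'i) Iset" where
  "Mapl A = \<lparr>carr = {f. (\<forall>j. f j \<in> carr A) \<and>
                        (\<forall>i j. actr A i (f j) = actl A i (f (j * i)))},
             actl = (\<lambda>k f. f),
             actr = (\<lambda>k f. (\<lambda>j. f (k * j)))\<rparr>"

definition Mapr :: "('a, 'i::monoid_mult) Iset \<Rightarrow> ('i \<Rightarrow> 'a, 'i) Iset" where
  "Mapr A = \<lparr>carr = {f. (\<forall>j. f j \<in> carr A) \<and>
                        (\<forall>i j. actr A i (f (i * j)) = actl A i (f j))},
             actl = (\<lambda>k f. (\<lambda>i. f (i * k))),
             actr = (\<lambda>k f. f)\<rparr>"

definition Map_mor :: "('a \<Rightarrow> 'b) \<Rightarrow> ('i \<Rightarrow> 'a) \<Rightarrow> ('i \<Rightarrow> 'b)" where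
  "Map_mor u = (\<lambda>h. u \<circ> h)"

definition ev :: "('i::monoid_mult \<Rightarrow> 'a) \<Rightarrow> 'a" where
  "ev h = h 1"

end

theory Submission
  imports Defs
begin

text \<open>An element h of Map^l(Map^l(A)) is determined by h 1, namely h j = (m \<mapsto> h 1 (j m)):
  this is the defining condition of Map^l(Map^l(A)) at the index 1, since the left action
  of Map^l(A) is trivial.  Conversely every f in Map^l(A) arises from the shift
  (j, m) \<mapsto> f (j m), so evaluation at 1 is a bijection with the shift as inverse; the
  action conditions reduce to associativity of the monoid.  Map^r is the mirror image.
  Nothing about A is used.\<close>

lemma mem_Mapl_iff:
  "f \<in> carr (Mapl A) \<longleftrightarrow> (\<forall>j. f j \<in> carr A) \<and> (\<forall>i j. actr A i (f j) = actl A i (f (j * i)))"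
  by (simp add: Mapl_def)

lemma actl_Mapl [simp]: "actl (Mapl A) k f = f"
  by (simp add: Mapl_def)

lemma actr_Mapl [simp]: "actr (Mapl A) k f = (\<lambda>j. f (k * j))"
  by (simp add: Mapl_def)

lemma mem_Mapr_iff:
  "f \<in> carr (Mapr A) \<longleftrightarrow> (\<forall>j. f j \<in> carr A) \<and> (\<forall>i j. actr A i (f (i * j)) = actl A i (f j))"
  by (simp add: Mapr_def)

lemma actl_Mapr [simp]: "actl (Mapr A) k f = (\<lambda>i. f (i * k))"
  by (simp add: Mapr_def)

lemma actr_Mapr [simp]: "actr (Mapr A) k f = f"
  by (simp add: Mapr_def)

lemma ev_Map_mor: "ev (Map_mor (Map_mor u) h) = Map_mor u (ev h)"
  by (simp add: ev_def Map_mor_def)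

definition lshift :: "('i::monoid_mult \<Rightarrow> 'a) \<Rightarrow> 'i \<Rightarrow> 'i \<Rightarrow> 'a" where
  "lshift f = (\<lambda>j m. f (j * m))"

lemma Mapl_Mapl_apply:
  assumes "h \<in> carr (Mapl (Mapl A))"
  shows "h j = (\<lambda>m. h 1 (j * m))"
  using assms unfolding mem_Mapl_iff by (metis actl_Mapl actr_Mapl mult_1_left)

lemma lshift_ev: "h \<in> carr (Mapl (Mapl A)) \<Longrightarrow> lshift (ev h) = h"
  unfolding lshift_def ev_def by (rule ext) (simp add: Mapl_Mapl_apply[of h A, symmetric])

lemma ev_lshift: "ev (lshift f) = f"
  by (simp add: lshift_def ev_def)

lemma ev_in_Mapl: "h \<in> carr (Mapl (Mapl A)) \<Longrightarrow> ev h \<in> carr (Mapl A)"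
  unfolding ev_def mem_Mapl_iff[of h] by blast

lemma lshift_in_Mapl_Mapl: "f \<in> carr (Mapl A) \<Longrightarrow> lshift f \<in> carr (Mapl (Mapl A))"
  unfolding mem_Mapl_iff by (simp add: lshift_def mult.assoc)

lemma bij_betw_ev_Mapl: "bij_betw ev (carr (Mapl (Mapl A))) (carr (Mapl A))"
  by (rule bij_betw_byWitness[where f' = lshift])
     (auto simp: lshift_ev ev_lshift ev_in_Mapl lshift_in_Mapl_Mapl)

lemma equivariant_ev_Mapl: "equivariant (Mapl (Mapl A)) (Mapl A) ev"
  unfolding equivariant_def
proof (intro conjI allI ballI)
  fix i h
  assume "h \<in> carr (Mapl (Mapl A))"
  then show "actr (Mapl A) i (ev (actl (Mapl (Mapl A)) i h))
           = actl (Mapl A) i (ev (actr (Mapl (Mapl A)) i h))"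
    by (simp add: ev_def Mapl_Mapl_apply[of h A i])
qed (rule ev_in_Mapl)

lemma equivariant_lshift: "equivariant (Mapl A) (Mapl (Mapl A)) lshift"
  unfolding equivariant_def
  by (intro conjI allI ballI lshift_in_Mapl_Mapl) (simp_all add: lshift_def mult.assoc)

definition rshift :: "('i::monoid_mult \<Rightarrow> 'a) \<Rightarrow> 'i \<Rightarrow> 'i \<Rightarrow> 'a" where
  "rshift f = (\<lambda>j m. f (m * j))"

lemma Mapr_Mapr_apply:
  assumes "h \<in> carr (Mapr (Mapr A))"
  shows "h j = (\<lambda>m. h 1 (m * j))"
  using assms unfolding mem_Mapr_iff by (metis actl_Mapr actr_Mapr mult_1_right)

lemma rshift_ev: "h \<in> carr (Mapr (Mapr A)) \<Longrightarrow> rshift (ev h) = h"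
  unfolding rshift_def ev_def by (rule ext) (simp add: Mapr_Mapr_apply[of h A, symmetric])

lemma ev_rshift: "ev (rshift f) = f"
  by (simp add: rshift_def ev_def)

lemma ev_in_Mapr: "h \<in> carr (Mapr (Mapr A)) \<Longrightarrow> ev h \<in> carr (Mapr A)"
  unfolding ev_def mem_Mapr_iff[of h] by blast

lemma rshift_in_Mapr_Mapr: "f \<in> carr (Mapr A) \<Longrightarrow> rshift f \<in> carr (Mapr (Mapr A))"
  unfolding mem_Mapr_iff by (simp add: rshift_def mult.assoc)

lemma bij_betw_ev_Mapr: "bij_betw ev (carr (Mapr (Mapr A))) (carr (Mapr A))"
  by (rule bij_betw_byWitness[where f' = rshift])
     (auto simp: rshift_ev ev_rshift ev_in_Mapr rshift_in_Mapr_Mapr)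

lemma equivariant_ev_Mapr: "equivariant (Mapr (Mapr A)) (Mapr A) ev"
  unfolding equivariant_def
proof (intro conjI allI ballI)
  fix i h
  assume "h \<in> carr (Mapr (Mapr A))"
  then show "actr (Mapr A) i (ev (actl (Mapr (Mapr A)) i h))
           = actl (Mapr A) i (ev (actr (Mapr (Mapr A)) i h))"
    by (simp add: ev_def Mapr_Mapr_apply[of h A i])
qed (rule ev_in_Mapr)

lemma equivariant_rshift: "equivariant (Mapr A) (Mapr (Mapr A)) rshift"
  unfolding equivariant_def
  by (intro conjI allI ballI rshift_in_Mapr_Mapr) (simp_all add: rshift_def mult.assoc)

theorem mainTheorem9:
  fixes A :: "('k \<Rightarrow> 'c, 'i::monoid_mult) Iset"
  assumes "bACT A"
  shows
   "(bij_betw ev (carr (Mapl (Mapl A))) (carr (Mapl A)) \<and>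
     equivariant (Mapl (Mapl A)) (Mapl A) ev \<and>
     (\<exists>g. equivariant (Mapl A) (Mapl (Mapl A)) g \<and>
          (\<forall>h\<in>carr (Mapl (Mapl A)). g (ev h) = h) \<and>
          (\<forall>f\<in>carr (Mapl A). ev (g f) = f)) \<and>
     (\<forall>(B::('k2 \<Rightarrow> 'c2, 'i) Iset) u. bACT B \<longrightarrow> equivariant A B u \<longrightarrow>
        (\<forall>h\<in>carr (Mapl (Mapl A)). ev (Map_mor (Map_mor u) h) = Map_mor u (ev h))))
    \<and>
    (bij_betw ev (carr (Mapr (Mapr A))) (carr (Mapr A)) \<and>
     equivariant (Mapr (Mapr A)) (Mapr A) ev \<and>
     (\<exists>g. equivariant (Mapr A) (Mapr (Mapr A)) g \<and>
          (\<forall>h\<in>carr (Mapr (Mapr A)). g (ev h) = h) \<and>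
          (\<forall>f\<in>carr (Mapr A). ev (g f) = f)) \<and>
     (\<forall>(B::('k2 \<Rightarrow> 'c2, 'i) Iset) u. bACT B \<longrightarrow> equivariant A B u \<longrightarrow>
        (\<forall>h\<in>carr (Mapr (Mapr A)). ev (Map_mor (Map_mor u) h) = Map_mor u (ev h))))"
proof (intro conjI)
  show "\<exists>g. equivariant (Mapl A) (Mapl (Mapl A)) g \<and>
          (\<forall>h\<in>carr (Mapl (Mapl A)). g (ev h) = h) \<and> (\<forall>f\<in>carr (Mapl A). ev (g f) = f)"
    by (intro exI[of _ lshift] conjI ballI equivariant_lshift lshift_ev ev_lshift)
  show "\<exists>g. equivariant (Mapr A) (Mapr (Mapr A)) g \<and>
          (\<forall>h\<in>carr (Mapr (Mapr A)). g (ev h) = h) \<and> (\<forall>f\<in>carr (Mapr A). ev (g f) = f)"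
    by (intro exI[of _ rshift] conjI ballI equivariant_rshift rshift_ev ev_rshift)
qed (simp_all add: bij_betw_ev_Mapl equivariant_ev_Mapl bij_betw_ev_Mapr equivariant_ev_Mapr
       ev_Map_mor)

end
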